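(* Let $G$ be a finite simple graph containing at least one critical vertex. Let $a \geq 1$ and let $r_1, \ldots, r_a$ be positive integers with $1 + \sum_{i=1}^a r_i = \chi(G)$. Among all $(r_1, \ldots, r_a)$-partitioned colorings of $G$, choose one, $\pi = \{\{x\}, L_{11}, \ldots, L_{1r_1}, \ldots, L_{a1}, \ldots, L_{ar_a}\}$, minimizing \[\sum_{i=1}^a \left\| G\Big[\bigcup_{j=1}^{r_i} L_{ij}\Big] \right\|.\] Put $U_i = \bigcup_{j=1}^{r_i} L_{ij}$ and let $Z_i(x)$ be the connected component containing $x$ of $G[\{x\} \cup U_i]$. If $1 \leq i \leq a$ and $d_{Z_i(x)}(x) = r_i$, then $Z_i(x)$ is a complete graph if $r_i \geq 3$, and $Z_i(x)$ is an odd cycle if $r_i = 2$.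
   Context: A vertex $v$ of $G$ is critical if $\chi(G - v) < \chi(G)$. For a graph $H$, $\|H\|$ denotes the number of edges of $H$, and $d_H(v)$ the degree of $v$ in $H$. Given $a \geq 1$ and $r_1, \ldots, r_a$ with $1 + \sum_i r_i = \chi(G)$, an $(r_1, \ldots, r_a)$-partitioned coloring of $G$ is a proper coloring of $G$ with exactly $\chi(G)$ color classes, written in the form $\{\{x\}, L_{11}, \ldots, L_{1r_1}, L_{21}, \ldots, L_{2r_2}, \ldots, L_{a1}, \ldots, L_{ar_a}\}$, where $\{x\}$ is a singleton color class (for some vertex $x$) and each $L_{ij}$ is a color class. *)

theory Defs
  imports Main
begin

definition simple_graph :: "'a set \<Rightarrow> 'a set set \<Rightarrow> bool" where
  "simple_graph V E \<longleftrightarrow> finite V \<and>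
     (\<forall>e\<in>E. \<exists>u v. e = {u, v} \<and> u \<noteq> v \<and> u \<in> V \<and> v \<in> V)"

definition colorable :: "'a set \<Rightarrow> 'a set set \<Rightarrow> nat \<Rightarrow> bool" where
  "colorable V E k \<longleftrightarrow> (\<exists>f :: 'a \<Rightarrow> nat. (\<forall>v\<in>V. f v < k) \<and>
     (\<forall>u\<in>V. \<forall>v\<in>V. {u, v} \<in> E \<longrightarrow> f u \<noteq> f v))"

definition chi :: "'a set \<Rightarrow> 'a set set \<Rightarrow> nat" where
  "chi V E = (LEAST k. colorable V E k)"

definition del_vertex_edges :: "'a set set \<Rightarrow> 'a \<Rightarrow> 'a set set" where
  "del_vertex_edges E v = {e \<in> E. v \<notin> e}"

definition critical_vertex :: "'a set \<Rightarrow> 'a set set \<Rightarrow> 'a \<Rightarrow> bool" where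
  "critical_vertex V E v \<longleftrightarrow> v \<in> V \<and>
     chi (V - {v}) (del_vertex_edges E v) < chi V E"

definition induced_edges :: "'a set set \<Rightarrow> 'a set \<Rightarrow> 'a set set" where
  "induced_edges E S = {e \<in> E. e \<subseteq> S}"

definition num_induced_edges :: "'a set set \<Rightarrow> 'a set \<Rightarrow> nat" where
  "num_induced_edges E S = card (induced_edges E S)"

text \<open>An (r_1,...,r_a)-partitioned coloring {{x}, L_11, ..., L_{a r_a}}: color classes
  {x} and L i j (1 \<le> i \<le> a, 1 \<le> j \<le> r i), nonempty, pairwise disjoint,
  independent, covering V. (The requirement of exactly chi(G) classes is
  1 + sum r_i = chi(G), which is a hypothesis of the theorem.)\<close>
definition partitioned_coloring ::
  "'a set \<Rightarrow> 'a set set \<Rightarrow> nat \<Rightarrow> (nat \<Rightarrow> nat) \<Rightarrow> 'a \<Rightarrow> (nat \<Rightarrow> nat \<Rightarrow> 'a set) \<Rightarrow> bool" where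
  "partitioned_coloring V E a r x L \<longleftrightarrow>
     x \<in> V \<and>
     (\<forall>i\<in>{1..a}. \<forall>j\<in>{1..r i}.
        L i j \<subseteq> V \<and> L i j \<noteq> {} \<and> x \<notin> L i j \<and>
        (\<forall>u\<in>L i j. \<forall>v\<in>L i j. {u, v} \<notin> E)) \<and>
     (\<forall>i\<in>{1..a}. \<forall>j\<in>{1..r i}. \<forall>i'\<in>{1..a}. \<forall>j'\<in>{1..r i'}.
        (i, j) \<noteq> (i', j') \<longrightarrow> L i j \<inter> L i' j' = {}) \<and>
     V = {x} \<union> (\<Union>i\<in>{1..a}. \<Union>j\<in>{1..r i}. L i j)"

definition U_part :: "(nat \<Rightarrow> nat) \<Rightarrow> (nat \<Rightarrow> nat \<Rightarrow> 'a set) \<Rightarrow> nat \<Rightarrow> 'a set" where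
  "U_part r L i = (\<Union>j\<in>{1..r i}. L i j)"

definition pc_cost :: "'a set set \<Rightarrow> nat \<Rightarrow> (nat \<Rightarrow> nat) \<Rightarrow> (nat \<Rightarrow> nat \<Rightarrow> 'a set) \<Rightarrow> nat" where
  "pc_cost E a r L = (\<Sum>i=1..a. num_induced_edges E (U_part r L i))"

definition component :: "'a set set \<Rightarrow> 'a set \<Rightarrow> 'a \<Rightarrow> 'a set" where
  "component E S x = {y. (\<lambda>u v. u \<in> S \<and> v \<in> S \<and> {u, v} \<in> E)\<^sup>*\<^sup>* x y \<and> y \<in> S}"

definition degree :: "'a set set \<Rightarrow> 'a \<Rightarrow> nat" where
  "degree F v = card {u. {v, u} \<in> F \<and> u \<noteq> v}"

definition complete_graph :: "'a set \<Rightarrow> 'a set set \<Rightarrow> bool" where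
  "complete_graph C F \<longleftrightarrow> (\<forall>u\<in>C. \<forall>v\<in>C. u \<noteq> v \<longrightarrow> {u, v} \<in> F)"

definition odd_cycle :: "'a set \<Rightarrow> 'a set set \<Rightarrow> bool" where
  "odd_cycle C F \<longleftrightarrow> (\<exists>vs. distinct vs \<and> set vs = C \<and> length vs \<ge> 3 \<and> odd (length vs) \<and>
     F = {{vs ! k, vs ! ((k + 1) mod length vs)} | k. k < length vs})"

end

theory Submission
  imports Defs
begin

text \<open>
  Put \<open>W = {x} \<union> U\<^sub>i\<close>. The graph \<open>G[W]\<close> is not \<open>r\<^sub>i\<close>-colourable, for otherwise \<open>G\<close> could be
  coloured with \<open>\<chi>(G) - 1\<close> colours. If \<open>y \<in> W\<close> and \<open>G[W - y]\<close> has an \<open>r\<^sub>i\<close>-colouring, then this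
  colouring uses every colour, and making \<open>y\<close> the singleton class gives another partitioned
  colouring; by minimality \<open>d\<^sub>W(y) \<le> d\<^sub>W(x) = r\<^sub>i\<close>, and since all colours occur around \<open>y\<close>,
  equality holds and the neighbours of \<open>y\<close> have distinct colours.

  So in such a colouring the uncoloured vertex can walk along any Kempe chain, which keeps every
  vertex on a chain of degree 2 within the chain. A vertex other than the uncoloured \<open>v\<close> cannot lie on
  two chains through \<open>v\<close> unless it is adjacent to \<open>v\<close>, because it could then be recoloured with a
  missing fourth colour. For \<open>r\<^sub>i \<ge> 3\<close> a Kempe swap turns two non-adjacent neighbours of \<open>v\<close> into such
  a configuration, so the neighbourhood of \<open>v\<close> is a clique and the component of \<open>x\<close> is complete.
  For \<open>r\<^sub>i = 2\<close> the whole of \<open>W\<close> is one Kempe set, so the component of \<open>x\<close> is 2-regular, i.e. a cycle,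
  and it is odd because an even cycle is 2-colourable.
\<close>

locale sym_graph =
  fixes W :: "'a set" and adj :: "'a \<Rightarrow> 'a \<Rightarrow> bool"
  assumes finite_W: "finite W"
    and adj_sym: "adj u v \<Longrightarrow> adj v u"
    and adj_irrefl: "\<not> adj u u"
begin

definition nbrs :: "'a \<Rightarrow> 'a set" where
  "nbrs y = {u\<in>W. adj y u}"

definition linked :: "'a set \<Rightarrow> 'a \<Rightarrow> 'a \<Rightarrow> bool" where
  "linked S = (\<lambda>a b. a \<in> S \<and> b \<in> S \<and> adj a b)\<^sup>*\<^sup>*"

lemma finite_nbrs: "finite (nbrs y)"
  using finite_W by (simp add: nbrs_def)

lemma nbrs_subset: "nbrs y \<subseteq> W - {y}"
  using adj_irrefl by (auto simp: nbrs_def)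

lemma linked_refl: "linked S a a"
  by (simp add: linked_def)

lemma linked_step: "linked S a b \<Longrightarrow> b \<in> S \<Longrightarrow> c \<in> S \<Longrightarrow> adj b c \<Longrightarrow> linked S a c"
  unfolding linked_def by (simp add: rtranclp.rtrancl_into_rtrancl)

lemma linked_closed:
  assumes "linked S a b" "a \<in> S" shows "b \<in> S"
  using assms(1) unfolding linked_def by (induction rule: rtranclp_induct) (use assms(2) in auto)

lemma linked_mono:
  assumes "S \<subseteq> T" "linked S a b" shows "linked T a b"
  using assms(2) unfolding linked_def
  by (induction rule: rtranclp_induct) (use assms(1) in \<open>auto intro: rtranclp.rtrancl_into_rtrancl\<close>)

lemma linked_sym:
  assumes "linked S a b" shows "linked S b a"
  using assms unfolding linked_def
  by (induction rule: rtranclp_induct) (auto intro: converse_rtranclp_into_rtranclp adj_sym)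

lemma linked_component:
  assumes "linked S a b" shows "linked {z. linked S a z} a b"
proof -
  define C where "C = {z. linked S a z}"
  from assms have "linked C a b" unfolding linked_def[of S]
  proof (induction rule: rtranclp_induct)
    case base show ?case by (rule linked_refl)
  next
    case (step z' z)
    have "z' \<in> C" using step(1) by (simp add: C_def linked_def)
    moreover have "z \<in> C" using calculation step(2) linked_step by (simp add: C_def)
    ultimately show ?case using linked_step[OF step.IH] step(2) by simp
  qed
  thus ?thesis by (simp add: C_def)
qed

lemma linked_via_nbr:
  assumes yv: "linked S v y" and v: "v \<in> S" "v \<noteq> y"
  shows "\<exists>a\<in>S. adj a y \<and> linked (S - {y}) v a"
proof (rule ccontr)
  assume none: "\<not> ?thesis"
  have "linked (S - {y}) v z" if "linked S v z" for z
    using that unfolding linked_def[of S]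
  proof (induction rule: rtranclp_induct)
    case base show ?case by (rule linked_refl)
  next
    case (step z' z)
    have "z' \<in> S - {y}" using linked_closed[OF step.IH] v by blast
    hence "z \<noteq> y" using none step.IH step.hyps(2) by auto
    thus ?case using linked_step[OF step.IH \<open>z' \<in> S - {y}\<close>] step.hyps(2) by blast
  qed
  hence "y \<in> S - {y}" using linked_closed yv v by blast
  thus False by simp
qed

definition proper_on :: "'a set \<Rightarrow> ('a \<Rightarrow> nat) \<Rightarrow> bool" where
  "proper_on S f \<longleftrightarrow> (\<forall>u\<in>S. \<forall>v\<in>S. adj u v \<longrightarrow> f u \<noteq> f v)"

lemma proper_onD: "proper_on S f \<Longrightarrow> u \<in> S \<Longrightarrow> v \<in> S \<Longrightarrow> adj u v \<Longrightarrow> f u \<noteq> f v"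
  by (simp add: proper_on_def)

lemma proper_on_subset: "proper_on T f \<Longrightarrow> S \<subseteq> T \<Longrightarrow> proper_on S f"
  by (auto simp: proper_on_def)

lemma proper_on_insert:
  assumes "proper_on S f" "\<And>w. w \<in> S \<Longrightarrow> adj y w \<Longrightarrow> f w \<noteq> c"
  shows "proper_on (insert y S) (f(y := c))"
  using assms adj_irrefl adj_sym unfolding proper_on_def by (smt (verit, best) fun_upd_apply insert_iff)

lemma even_sum_degrees:
  assumes "finite R" shows "even (\<Sum>z\<in>R. card {w\<in>R. adj z w})"
  using assms
proof (induction R rule: finite_induct)
  case empty thus ?case by simp
next
  case (insert y R)
  have deg_y: "{w\<in>insert y R. adj y w} = {w\<in>R. adj y w}" using adj_irrefl by auto
  have deg_z: "card {w\<in>insert y R. adj z w} = card {w\<in>R. adj z w} + (if adj z y then 1 else 0)"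
    if "z \<in> R" for z
  proof (cases "adj z y")
    case True
    hence "{w\<in>insert y R. adj z w} = insert y {w\<in>R. adj z w}" by auto
    thus ?thesis using insert True by simp
  next
    case False
    hence "{w\<in>insert y R. adj z w} = {w\<in>R. adj z w}" by auto
    thus ?thesis using False by simp
  qed
  have "(\<Sum>z\<in>R. (if adj z y then 1 else 0::nat)) = card {w\<in>R. adj y w}"
  proof -
    have "{z\<in>R. adj z y} = {w\<in>R. adj y w}" using adj_sym by auto
    thus ?thesis using insert by (simp add: sum.If_cases Int_def)
  qed
  hence "(\<Sum>z\<in>insert y R. card {w\<in>insert y R. adj z w})
      = 2 * card {w\<in>R. adj y w} + (\<Sum>z\<in>R. card {w\<in>R. adj z w})"
    using insert deg_y deg_z by (simp add: sum.distrib)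
  thus ?case using insert by simp
qed

lemma linked_odd_degree:
  assumes D: "finite D" and v: "v \<in> D" and odd_v: "odd (card {u\<in>D. adj v u})"
  shows "\<exists>z. z \<noteq> v \<and> linked D v z \<and> odd (card {u\<in>D. adj z u})"
proof (rule ccontr)
  assume no_odd: "\<not> ?thesis"
  define R where "R = {z. linked D v z}"
  have RD: "R \<subseteq> D" using linked_closed[OF _ v] by (auto simp: R_def)
  have finR: "finite R" using RD D finite_subset by blast
  have vR: "v \<in> R" by (simp add: R_def linked_refl)
  have deg: "{u\<in>R. adj z u} = {u\<in>D. adj z u}" if "z \<in> R" for z
    using that RD linked_step[of D v z] by (auto simp: R_def)
  have "even (\<Sum>z\<in>R - {v}. card {u\<in>R. adj z u})"
    using no_odd deg by (intro dvd_sum) (auto simp: R_def)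
  moreover have "(\<Sum>z\<in>R. card {u\<in>R. adj z u})
      = card {u\<in>D. adj v u} + (\<Sum>z\<in>R - {v}. card {u\<in>R. adj z u})"
    using sum.remove[OF finR vR, of "\<lambda>z. card {u\<in>R. adj z u}"] deg[OF vR] by simp
  ultimately show False using even_sum_degrees[OF finR] odd_v by simp
qed

definition path :: "'a list \<Rightarrow> bool" where
  "path vs \<longleftrightarrow> distinct vs \<and> vs \<noteq> [] \<and> set vs \<subseteq> W \<and>
     (\<forall>k. Suc k < length vs \<longrightarrow> adj (vs!k) (vs!Suc k))"

definition cycle :: "'a list \<Rightarrow> bool" where
  "cycle vs \<longleftrightarrow> distinct vs \<and> 3 \<le> length vs \<and> set vs \<subseteq> W \<and>
     (\<forall>k<length vs. nbrs (vs!k) =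
        {vs!((k + 1) mod length vs), vs!((k + length vs - 1) mod length vs)})"

lemma path_Cons:
  assumes "path vs" "b \<in> nbrs (hd vs)" "b \<notin> set vs"
  shows "path (b # vs)"
  unfolding path_def
proof (intro conjI allI impI)
  show "distinct (b # vs)" "b # vs \<noteq> []" "set (b # vs) \<subseteq> W"
    using assms by (auto simp: path_def nbrs_def)
next
  fix k assume k: "Suc k < length (b # vs)"
  show "adj ((b # vs) ! k) ((b # vs) ! Suc k)"
  proof (cases k)
    case 0 thus ?thesis using assms adj_sym by (auto simp: path_def nbrs_def hd_conv_nth)
  next
    case (Suc k') thus ?thesis using assms k by (simp add: path_def)
  qed
qed

lemma longest_path:
  assumes x: "x \<in> W"
  obtains vs where "path vs" "set vs \<subseteq> {z. linked W x z}" "nbrs (hd vs) \<subseteq> set vs"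
proof -
  define P where "P = {vs. path vs \<and> set vs \<subseteq> {z. linked W x z}}"
  have "P \<subseteq> {vs. set vs \<subseteq> W \<and> distinct vs}" by (auto simp: P_def path_def)
  hence finP: "finite P" using finite_subset_distinct[OF finite_W] finite_subset by blast
  have "[x] \<in> P" using x by (simp add: P_def path_def linked_refl)
  hence "Max (length ` P) \<in> length ` P" using finP by (intro Max_in) auto
  then obtain vs where vs: "vs \<in> P" "length vs = Max (length ` P)" by auto
  have "nbrs (hd vs) \<subseteq> set vs"
  proof
    fix b assume b: "b \<in> nbrs (hd vs)"
    show "b \<in> set vs"
    proof (rule ccontr)
      assume "b \<notin> set vs"
      hence "path (b # vs)" using path_Cons b vs(1) by (simp add: P_def)
      moreover have "linked W x b"
      proof -
        have "hd vs \<in> set vs" using vs(1) by (simp add: P_def path_def)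
        hence "linked W x (hd vs)" "hd vs \<in> W" using vs(1) unfolding P_def path_def by blast+
        thus ?thesis using b linked_step by (auto simp: nbrs_def)
      qed
      ultimately have "b # vs \<in> P" using vs(1) by (simp add: P_def)
      hence "length (b # vs) \<le> Max (length ` P)" using finP by (intro Max_ge) (auto intro: image_eqI[where x = "b # vs"])
      thus False using vs(2) by simp
    qed
  qed
  thus thesis using that vs(1) unfolding P_def by blast
qed

lemma path_wraps_around:
  assumes p: "path vs" and deg2: "\<And>z. z \<in> set vs \<Longrightarrow> card (nbrs z) = 2"
    and hd_nbrs: "nbrs (vs!0) \<subseteq> set vs"
  shows "3 \<le> length vs" "adj (vs!(length vs - 1)) (vs!0)"
proof -
  define n where "n = length vs"
  have dv: "distinct vs" "set vs \<subseteq> W" and n1: "1 \<le> n"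
    and av: "\<And>k. Suc k < n \<Longrightarrow> adj (vs!k) (vs!Suc k)"
    using p by (auto simp: path_def n_def Suc_le_eq)
  have vsW: "vs!k \<in> W" if "k < n" for k using that dv(2) nth_mem n_def by blast
  have deg: "card (nbrs (vs!k)) = 2" if "k < n" for k using that deg2 nth_mem n_def by blast
  have "nbrs (vs!0) \<subseteq> set vs - {vs!0}" using hd_nbrs nbrs_subset by blast
  hence "card (nbrs (vs!0)) \<le> card (set vs - {vs!0})" by (intro card_mono) auto
  hence "2 \<le> card (set vs - {vs!0})" using deg[of 0] n1 by simp
  moreover have "0 < length vs" using n1 unfolding n_def by linarith
  hence "vs!0 \<in> set vs" by (rule nth_mem)
  hence "card (set vs - {vs!0}) = n - 1"
    using dv by (simp add: card_Diff_singleton distinct_card n_def)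
  ultimately have n3: "3 \<le> n" by simp
  thus "3 \<le> length vs" by (simp add: n_def)
  have "vs!1 \<in> nbrs (vs!0)" using av[of 0] n3 vsW[of 1] by (simp add: nbrs_def)
  moreover have "card (nbrs (vs!0)) = 2" using deg[of 0] n1 by simp
  then obtain b1 b2 where "nbrs (vs!0) = {b1, b2}" "b1 \<noteq> b2" by (meson card_2_iff)
  ultimately obtain b where b: "b \<in> nbrs (vs!0)" "b \<noteq> vs!1" by blast
  hence "b \<in> set vs" using hd_nbrs by blast
  then obtain t where t: "t < n" "vs!t = b" by (auto simp: in_set_conv_nth n_def)
  have t0: "t \<noteq> 0"
  proof
    assume "t = 0"
    with t b show False using adj_irrefl by (simp add: nbrs_def)
  qed
  have "t = n - 1"
  proof (rule ccontr)
    assume "t \<noteq> n - 1"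
    hence tt: "t + 1 < n" using t by simp
    have "{vs!(t-1), vs!(t+1), vs!0} \<subseteq> nbrs (vs!t)"
      using av[of "t-1"] av[of t] t0 t tt b adj_sym vsW by (auto simp: nbrs_def)
    moreover have "card {vs!(t-1), vs!(t+1), vs!0} = 3"
    proof -
      have "t - 1 < length vs" "t + 1 < length vs" "0 < length vs" using tt by (auto simp: n_def)
      hence "vs!(t-1) \<noteq> vs!(t+1)" "vs!(t-1) \<noteq> vs!0" "vs!(t+1) \<noteq> vs!0"
        using nth_eq_iff_index_eq[OF dv(1)] t0 t b by auto
      thus ?thesis by simp
    qed
    ultimately have "3 \<le> card (nbrs (vs!t))" using card_mono[OF finite_nbrs] by metis
    thus False using deg[OF t(1)] by simp
  qed
  thus "adj (vs!(length vs - 1)) (vs!0)" using b t adj_sym by (auto simp: nbrs_def n_def)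
qed

lemma closed_path_cycle:
  assumes p: "path vs" and deg2: "\<And>z. z \<in> set vs \<Longrightarrow> card (nbrs z) = 2"
    and len3: "3 \<le> length vs" and wrap: "adj (vs!(length vs - 1)) (vs!0)"
  shows "cycle vs"
proof -
  define n where "n = length vs"
  have n3: "3 \<le> n" using len3 by (simp add: n_def)
  have dv: "distinct vs" "set vs \<subseteq> W"
    and av: "\<And>k. Suc k < n \<Longrightarrow> adj (vs!k) (vs!Suc k)"
    using p by (auto simp: path_def n_def)
  have vsW: "vs!k \<in> W" if "k < n" for k using that dv(2) nth_mem n_def by blast
  have next_adj: "adj (vs!k) (vs!((k + 1) mod n))" if "k < n" for k
  proof (cases "k + 1 < n")
    case True thus ?thesis using av[of k] by simp
  next
    case False
    hence "k + 1 = n" using that by simp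
    hence "k = n - 1" "(k + 1) mod n = 0" by auto
    thus ?thesis using wrap by (simp add: n_def)
  qed
  have prev_adj: "adj (vs!k) (vs!((k + n - 1) mod n))" if "k < n" for k
  proof (cases k)
    case 0 thus ?thesis using wrap adj_sym n3 by (simp add: n_def)
  next
    case (Suc k')
    hence "(k + n - 1) mod n = k'" using that by simp
    thus ?thesis using av[of k'] adj_sym Suc that by simp
  qed
  have "nbrs (vs!k) = {vs!((k + 1) mod n), vs!((k + n - 1) mod n)}" if k: "k < n" for k
  proof -
    have "0 < n" using n3 unfolding n_def by linarith
    hence idx: "(k + 1) mod n < n" "(k + n - 1) mod n < n" by simp_all
    have sub: "{vs!((k + 1) mod n), vs!((k + n - 1) mod n)} \<subseteq> nbrs (vs!k)"
      using next_adj[OF k] prev_adj[OF k] vsW[OF idx(1)] vsW[OF idx(2)] by (simp add: nbrs_def)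
    have "(k + 1) mod n \<noteq> (k + n - 1) mod n"
    proof (cases "k + 1 < n")
      case True thus ?thesis using k n3 by (cases k) auto
    next
      case False
      hence "k = n - 1" using k by simp
      thus ?thesis using n3 by (auto simp: mod_if)
    qed
    hence "card {vs!((k + 1) mod n), vs!((k + n - 1) mod n)} = 2"
      using nth_eq_iff_index_eq[OF dv(1)] idx by (simp add: n_def)
    thus ?thesis using card_subset_eq[OF finite_nbrs sub] deg2[of "vs!k"] k by (simp add: n_def)
  qed
  thus ?thesis using dv n3 by (simp add: cycle_def n_def)
qed

lemma cycle_nbrs_closed:
  assumes "cycle vs" "z \<in> set vs" "u \<in> nbrs z"
  shows "u \<in> set vs"
proof -
  obtain k where k: "k < length vs" "vs!k = z" using assms(2) by (auto simp: in_set_conv_nth)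
  moreover have "0 < length vs" using k(1) by linarith
  hence "(k + 1) mod length vs < length vs" "(k + length vs - 1) mod length vs < length vs" by simp_all
  ultimately show ?thesis using assms(1,3) by (auto simp: cycle_def)
qed

lemma cycle_linked_closed:
  assumes "cycle vs" "linked W z u" "z \<in> set vs"
  shows "u \<in> set vs"
  using assms(2) unfolding linked_def
  by (induction rule: rtranclp_induct)
     (use assms(1,3) cycle_nbrs_closed[OF assms(1)] in \<open>auto simp: nbrs_def\<close>)

lemma two_regular_component_cycle:
  assumes x: "x \<in> W" and deg2: "\<And>z. linked W x z \<Longrightarrow> card (nbrs z) = 2"
  obtains vs where "cycle vs" "set vs = {z. linked W x z}"
proof -
  obtain vs where p: "path vs" and comp: "set vs \<subseteq> {z. linked W x z}"
    and hd_nbrs: "nbrs (hd vs) \<subseteq> set vs"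
    using longest_path[OF x] by blast
  have ne: "vs \<noteq> []" using p by (simp add: path_def)
  have deg: "card (nbrs z) = 2" if "z \<in> set vs" for z using that comp deg2 by blast
  have "cycle vs"
    using path_wraps_around[OF p deg] closed_path_cycle[OF p deg] hd_nbrs ne
    by (simp add: hd_conv_nth)
  moreover have "{z. linked W x z} \<subseteq> set vs"
  proof
    fix z assume "z \<in> {z. linked W x z}"
    moreover have "x \<in> set vs"
      using cycle_linked_closed[OF \<open>cycle vs\<close> linked_sym] comp hd_in_set[OF ne] by blast
    ultimately show "z \<in> set vs" using cycle_linked_closed[OF \<open>cycle vs\<close>] by blast
  qed
  ultimately show thesis using that comp by blast
qed

lemma cycle_adj_iff:
  assumes c: "cycle vs" and a: "a \<in> set vs" and b: "b \<in> set vs"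
  shows "adj a b \<longleftrightarrow> (\<exists>k<length vs. {a, b} = {vs!k, vs!((k + 1) mod length vs)})"
proof
  define n where "n = length vs"
  have n3: "3 \<le> n" and nb: "\<And>k. k < n \<Longrightarrow> nbrs (vs!k) = {vs!((k + 1) mod n), vs!((k + n - 1) mod n)}"
    using c by (auto simp: cycle_def n_def)
  assume ab: "adj a b"
  obtain ka where ka: "ka < n" "vs!ka = a" using a by (auto simp: in_set_conv_nth n_def)
  have "b \<in> nbrs a" using ab b c by (auto simp: nbrs_def cycle_def)
  hence "b = vs!((ka + 1) mod n) \<or> b = vs!((ka + n - 1) mod n)" using nb ka by auto
  thus "\<exists>k<length vs. {a, b} = {vs!k, vs!((k + 1) mod length vs)}"
  proof
    assume "b = vs!((ka + 1) mod n)" thus ?thesis using ka by (auto simp: n_def)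
  next
    assume b: "b = vs!((ka + n - 1) mod n)"
    have "((ka + n - 1) mod n + 1) mod n = (ka + n - 1 + 1) mod n" by (simp add: mod_Suc_eq)
    also have "\<dots> = ka" using ka n3 by simp
    finally have "((ka + n - 1) mod n + 1) mod n = ka" .
    hence "{a, b} = {vs!((ka + n - 1) mod n), vs!(((ka + n - 1) mod n + 1) mod n)}"
      using b ka by (simp add: insert_commute)
    moreover have "(ka + n - 1) mod n < n" using n3 by simp
    ultimately show ?thesis unfolding n_def by blast
  qed
next
  assume "\<exists>k<length vs. {a, b} = {vs!k, vs!((k + 1) mod length vs)}"
  then obtain k where k: "k < length vs" "{a, b} = {vs!k, vs!((k + 1) mod length vs)}" by blast
  hence "adj (vs!k) (vs!((k + 1) mod length vs))" using c by (auto simp: cycle_def nbrs_def)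
  thus "adj a b" using k(2) adj_sym by (auto simp: doubleton_eq_iff)
qed

lemma even_cycle_colouring:
  assumes c: "cycle vs" and ev: "even (length vs)"
  obtains g :: "'a \<Rightarrow> nat" where "\<And>u. g u < 2"
    "\<And>u v. u \<in> set vs \<Longrightarrow> v \<in> set vs \<Longrightarrow> adj u v \<Longrightarrow> g u \<noteq> g v"
proof -
  define n where "n = length vs"
  define g where "g z = the_inv_into {..<n} ((!) vs) z mod 2" for z
  have inj: "inj_on ((!) vs) {..<n}" using c by (auto simp: cycle_def n_def intro: inj_on_nth)
  have g_nth: "g (vs!k) = k mod 2" if "k < n" for k
    using the_inv_into_f_f[OF inj] that by (simp add: g_def)
  have "g u \<noteq> g v" if uv: "u \<in> set vs" "v \<in> set vs" "adj u v" for u v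
  proof -
    obtain k where k: "k < n" "{u, v} = {vs!k, vs!((k + 1) mod n)}"
      using cycle_adj_iff[OF c uv(1,2)] uv(3) unfolding n_def by blast
    have "(k + 1) mod n mod 2 = (k + 1) mod 2" using ev by (simp add: n_def mod_mod_cancel)
    hence "g (vs!((k + 1) mod n)) = (k + 1) mod 2" using g_nth[of "(k + 1) mod n"] k(1) by simp
    hence "g (vs!k) \<noteq> g (vs!((k + 1) mod n))" using g_nth[OF k(1)] by presburger
    thus ?thesis using k(2) by (auto simp: doubleton_eq_iff)
  qed
  thus thesis using that[of g] by (simp add: g_def)
qed

end

lemma free_colour:
  fixes c :: "'a \<Rightarrow> nat"
  assumes N: "finite N" "card N = r" and AB: "A \<union> B \<subseteq> N" "A \<inter> B = {}"
    and card: "card A = 2" "card B = 2" and col: "\<forall>w\<in>A. c w = j" "\<forall>w\<in>B. c w = k"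
    and ijk: "i \<noteq> j" "i \<noteq> k" "j \<noteq> k" "i < r" "j < r" "k < r"
  obtains l where "l < r" "l \<noteq> i" "l \<noteq> j" "l \<notin> c ` N"
proof -
  have fin: "finite A" "finite B" using card by (auto intro: card_ge_0_finite)
  have cAB: "card (A \<union> B) = 4" using card_Un_disjoint[OF fin AB(2)] card by simp
  have "\<not> {0..<r} - {i, j, k} \<subseteq> c ` (N - (A \<union> B))"
  proof
    assume "{0..<r} - {i, j, k} \<subseteq> c ` (N - (A \<union> B))"
    hence "card ({0..<r} - {i, j, k}) \<le> card (c ` (N - (A \<union> B)))"
      using N by (intro card_mono) simp_all
    also have "\<dots> \<le> card (N - (A \<union> B))" using N by (intro card_image_le) simp
    also have "\<dots> = r - 4" using card_Diff_subset[OF _ AB(1)] cAB N fin by simp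
    finally have "r - 3 \<le> r - 4" using ijk by (simp add: card_Diff_subset)
    moreover have "4 \<le> r" using card_mono[OF N(1) AB(1)] cAB N by simp
    ultimately show False by simp
  qed
  then obtain l where "l \<in> {0..<r} - {i, j, k}" "l \<notin> c ` (N - (A \<union> B))" by blast
  moreover have "c ` N \<subseteq> c ` (N - (A \<union> B)) \<union> {j, k}" using col by auto
  ultimately show thesis using that[of l] by auto
qed

locale uncolourable_graph = sym_graph +
  fixes r :: nat
  assumes not_colourable: "\<not> ((\<forall>u\<in>W. f u < r) \<and> proper_on W f)"
begin

definition almost_colouring :: "'a \<Rightarrow> ('a \<Rightarrow> nat) \<Rightarrow> bool" where
  "almost_colouring y f \<longleftrightarrow> y \<in> W \<and> (\<forall>u\<in>W - {y}. f u < r) \<and> proper_on (W - {y}) f"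

lemma almost_colouring_nbr_coloured:
  assumes st: "almost_colouring y f" and c: "c < r"
  shows "\<exists>u\<in>nbrs y. f u = c"
proof (rule ccontr)
  assume "\<not> ?thesis"
  hence "proper_on (insert y (W - {y})) (f(y := c))"
    using st by (intro proper_on_insert) (auto simp: almost_colouring_def nbrs_def)
  moreover have "insert y (W - {y}) = W" using st by (auto simp: almost_colouring_def)
  moreover have "\<forall>u\<in>W. (f(y := c)) u < r" using st c by (auto simp: almost_colouring_def)
  ultimately show False using not_colourable by metis
qed

lemma almost_colouring_nbrs_image:
  assumes "almost_colouring y f" shows "f ` nbrs y = {0..<r}"
proof
  show "f ` nbrs y \<subseteq> {0..<r}" using nbrs_subset[of y] assms by (auto simp: almost_colouring_def)
  show "{0..<r} \<subseteq> f ` nbrs y" using almost_colouring_nbr_coloured[OF assms] by fastforce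
qed

lemma almost_colouring_recolour:
  assumes st: "almost_colouring v c" and y: "y \<in> W - {v}" and l: "l < r"
    and free: "\<And>w. w \<in> nbrs y \<Longrightarrow> c w \<noteq> l"
  shows "almost_colouring v (c(y := l))"
proof -
  have "proper_on (W - {v} - {y}) c"
    using st proper_on_subset[of "W - {v}" c] by (auto simp: almost_colouring_def)
  hence "proper_on (insert y (W - {v} - {y})) (c(y := l))"
    using free by (rule proper_on_insert) (simp add: nbrs_def)
  moreover have "insert y (W - {v} - {y}) = W - {v}" using y by auto
  ultimately show ?thesis using st l by (auto simp: almost_colouring_def)
qed

end

locale tight_uncolourable_graph = uncolourable_graph +
  assumes almost_colouring_degree: "almost_colouring y f \<Longrightarrow> card (nbrs y) \<le> r"
begin

lemma almost_colouring_inj_on_nbrs: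
  assumes "almost_colouring y f" shows "inj_on f (nbrs y)"
proof -
  have "card (f ` nbrs y) = r" using almost_colouring_nbrs_image[OF assms] by simp
  thus ?thesis
    using almost_colouring_degree[OF assms] card_image_le[OF finite_nbrs, of f y]
    by (simp add: eq_card_imp_inj_on finite_nbrs)
qed

lemma almost_colouring_card_nbrs:
  assumes "almost_colouring y f" shows "card (nbrs y) = r"
  using almost_colouring_nbrs_image[OF assms] card_image[OF almost_colouring_inj_on_nbrs[OF assms]]
  by simp

lemma almost_colouring_nbr_eq:
  "almost_colouring y f \<Longrightarrow> u \<in> nbrs y \<Longrightarrow> u' \<in> nbrs y \<Longrightarrow> f u = f u' \<Longrightarrow> u = u'"
  using almost_colouring_inj_on_nbrs by (auto dest: inj_onD)

text \<open>The colours on \<open>nbrs y\<close> are pairwise distinct, so \<open>f u\<close> is free at \<open>y\<close> once \<open>u\<close> is uncoloured.\<close>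
lemma almost_colouring_move:
  assumes st: "almost_colouring y f" and u: "u \<in> nbrs y"
  shows "almost_colouring u (f(y := f u))"
proof -
  have yu: "y \<noteq> u" "y \<in> W" "u \<in> W" using u st nbrs_subset by (auto simp: almost_colouring_def nbrs_def)
  have "proper_on (W - {y} - {u}) f"
    using st proper_on_subset[of "W - {y}" f] by (auto simp: almost_colouring_def)
  moreover have "f w \<noteq> f u" if "w \<in> W - {y} - {u}" "adj y w" for w
    using almost_colouring_nbr_eq[OF st _ u, of w] that by (auto simp: nbrs_def)
  ultimately have "proper_on (insert y (W - {y} - {u})) (f(y := f u))"
    by (rule proper_on_insert)
  moreover have "insert y (W - {y} - {u}) = W - {u}" using yu by auto
  moreover have "f u < r" using st yu by (auto simp: almost_colouring_def)
  ultimately show ?thesis using st yu by (auto simp: almost_colouring_def)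
qed

definition kempe_set :: "'a \<Rightarrow> ('a \<Rightarrow> nat) \<Rightarrow> nat \<Rightarrow> nat \<Rightarrow> 'a set" where
  "kempe_set y f j k = {y} \<union> {u \<in> W - {y}. f u = j \<or> f u = k}"

lemma centre_in_kempe_set: "y \<in> kempe_set y f j k"
  by (simp add: kempe_set_def)

lemma kempe_set_subset: "y \<in> W \<Longrightarrow> kempe_set y f j k \<subseteq> W"
  by (auto simp: kempe_set_def)

lemma almost_colouring_move_along:
  assumes st: "almost_colouring y f" and z: "linked (kempe_set y f j k) y z"
  shows "\<exists>g. almost_colouring z g \<and> kempe_set z g j k = kempe_set y f j k"
  using z unfolding linked_def
proof (induction rule: rtranclp_induct)
  case base thus ?case using st by blast
next
  case (step z' z)
  then obtain g where g: "almost_colouring z' g" "kempe_set z' g j k = kempe_set y f j k" by blast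
  have z: "z \<in> kempe_set z' g j k" "z' \<in> kempe_set z' g j k" "adj z' z" using step g by auto
  have zW: "z \<in> nbrs z'" using z g(1) by (auto simp: kempe_set_def nbrs_def almost_colouring_def)
  have ne: "z \<noteq> z'" using z adj_irrefl by auto
  have "kempe_set z (g(z' := g z)) j k = kempe_set z' g j k"
    using ne z zW g(1) by (auto simp: kempe_set_def nbrs_def almost_colouring_def)
  thus ?case using almost_colouring_move[OF g(1) zW] g(2) by metis
qed

lemma kempe_degree:
  assumes st: "almost_colouring y f" and jk: "j \<noteq> k" "j < r" "k < r"
    and z: "linked (kempe_set y f j k) y z"
  shows "card {w \<in> kempe_set y f j k. adj z w} = 2"
proof -
  obtain g where g: "almost_colouring z g" "kempe_set z g j k = kempe_set y f j k"
    using almost_colouring_move_along[OF st z] by blast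
  obtain uj uk where u: "uj \<in> nbrs z" "g uj = j" "uk \<in> nbrs z" "g uk = k"
    using almost_colouring_nbr_coloured[OF g(1)] jk by metis
  have "{w \<in> kempe_set z g j k. adj z w} = {uj, uk}"
  proof
    show "{w \<in> kempe_set z g j k. adj z w} \<subseteq> {uj, uk}"
    proof
      fix w assume w: "w \<in> {w \<in> kempe_set z g j k. adj z w}"
      hence "w \<in> nbrs z" "g w = j \<or> g w = k"
        using adj_irrefl[of z] by (auto simp: kempe_set_def nbrs_def)
      thus "w \<in> {uj, uk}" using almost_colouring_nbr_eq[OF g(1)] u by blast
    qed
    show "{uj, uk} \<subseteq> {w \<in> kempe_set z g j k. adj z w}"
      using u nbrs_subset by (auto simp: kempe_set_def nbrs_def)
  qed
  moreover have "uj \<noteq> uk" using u jk by auto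
  ultimately show ?thesis using g(2) by simp
qed

lemma card_nbrs_linked:
  assumes "almost_colouring y f" "linked (kempe_set y f j k) y z"
  shows "card (nbrs z) = r"
  using almost_colouring_move_along[OF assms] almost_colouring_card_nbrs by blast

text \<open>A vertex \<open>y\<close> on two Kempe chains through \<open>v\<close> sees both chain colours twice, so some
  fourth colour is missing around it; recolouring \<open>y\<close> with it cuts the \<open>(i,j)\<close>-chain at \<open>y\<close>,
  and a chain neighbour of \<open>y\<close> that stays linked to \<open>v\<close> loses one of its two chain neighbours.\<close>
lemma no_common_kempe_vertex:
  assumes st: "almost_colouring v c"
    and ijk: "i \<noteq> j" "i \<noteq> k" "j \<noteq> k" "i < r" "j < r" "k < r"
    and yj: "linked (kempe_set v c i j) v y" and yk: "linked (kempe_set v c i k) v y"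
    and yv: "y \<noteq> v" "\<not> adj y v"
  shows False
proof -
  have yW: "y \<in> W - {v}" and cy: "c y = i"
    using linked_closed[OF yj centre_in_kempe_set] linked_closed[OF yk centre_in_kempe_set] yv ijk
    by (auto simp: kempe_set_def)
  define A where "A = {w \<in> kempe_set v c i j. adj y w}"
  define B where "B = {w \<in> kempe_set v c i k. adj y w}"
  have chain_nbr: "w \<in> nbrs y \<and> c w = l" if "w \<in> kempe_set v c i l" "adj y w" for w l
  proof -
    have "w \<noteq> v" using that yv(2) adj_sym by blast
    hence "w \<in> W - {v}" "c w = i \<or> c w = l" using that by (auto simp: kempe_set_def)
    moreover have "c w \<noteq> i"
      using proper_onD[of "W - {v}" c y w] st yW \<open>w \<in> W - {v}\<close> that(2) cy
      by (auto simp: almost_colouring_def)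
    ultimately show ?thesis using that(2) by (simp add: nbrs_def)
  qed
  obtain l where l: "l < r" "l \<noteq> i" "l \<noteq> j" "l \<notin> c ` nbrs y"
  proof (rule free_colour[OF finite_nbrs card_nbrs_linked[OF st yj], of A B])
    show "A \<union> B \<subseteq> nbrs y" "\<forall>w\<in>A. c w = j" "\<forall>w\<in>B. c w = k"
      using chain_nbr by (auto simp: A_def B_def)
    thus "A \<inter> B = {}" using ijk(3) by auto
    show "card A = 2" using kempe_degree[OF st ijk(1,4,5) yj] by (simp add: A_def)
    show "card B = 2" using kempe_degree[OF st ijk(2,4,6) yk] by (simp add: B_def)
  qed (use ijk in auto)
  hence st': "almost_colouring v (c(y := l))" using almost_colouring_recolour[OF st yW] by blast
  have cut: "kempe_set v (c(y := l)) i j = kempe_set v c i j - {y}" using l yv by (auto simp: kempe_set_def)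
  obtain a where a: "a \<in> kempe_set v c i j" "adj a y" "linked (kempe_set v c i j - {y}) v a"
    using linked_via_nbr[OF yj centre_in_kempe_set yv(1)[symmetric]] by blast
  have "card {w \<in> kempe_set v c i j. adj a w} = 2"
    using kempe_degree[OF st ijk(1,4,5) linked_mono[OF _ a(3)]] by blast
  moreover have "card {w \<in> kempe_set v c i j - {y}. adj a w} = 2"
    using kempe_degree[OF st' ijk(1,4,5)] a(3) cut by simp
  moreover have "{w \<in> kempe_set v c i j - {y}. adj a w} = {w \<in> kempe_set v c i j. adj a w} - {y}"
    by auto
  moreover have "y \<in> {w \<in> kempe_set v c i j. adj a w}"
    using linked_closed[OF yj centre_in_kempe_set] a(2) by simp
  ultimately show False by (simp add: card_Diff_singleton)
qed

definition kempe_chain :: "'a \<Rightarrow> ('a \<Rightarrow> nat) \<Rightarrow> nat \<Rightarrow> nat \<Rightarrow> 'a set" where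
  "kempe_chain v c i m = {u. linked (kempe_set v c i m) v u} - {v}"

lemma kempe_chain_colours:
  "u \<in> kempe_chain v c i m \<Longrightarrow> u \<in> W - {v} \<and> (c u = i \<or> c u = m)"
  using linked_closed[OF _ centre_in_kempe_set] by (fastforce simp: kempe_chain_def kempe_set_def)

lemma kempe_chain_closed:
  assumes "u \<in> kempe_chain v c i m" "w \<in> W - {v}" "adj u w" "c w = i \<or> c w = m"
  shows "w \<in> kempe_chain v c i m"
proof -
  have "u \<in> kempe_set v c i m" "w \<in> kempe_set v c i m"
    using assms kempe_chain_colours[OF assms(1)] by (auto simp: kempe_set_def)
  thus ?thesis using assms linked_step by (auto simp: kempe_chain_def)
qed

lemma almost_colouring_kempe_swap:
  assumes st: "almost_colouring v c" and im: "i < r" "m < r"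
  obtains c' where "almost_colouring v c'"
    "\<And>u. u \<notin> kempe_chain v c i m \<Longrightarrow> c' u = c u"
    "\<And>u. u \<in> kempe_chain v c i m \<Longrightarrow> c u = i \<Longrightarrow> c' u = m"
proof -
  define S where "S = kempe_chain v c i m"
  define c' where "c' u = (if u \<in> S then (if c u = i then m else i) else c u)" for u
  have "c' u1 \<noteq> c' u2" if u: "u1 \<in> W - {v}" "u2 \<in> W - {v}" "adj u1 u2" for u1 u2
  proof -
    have ne: "c u1 \<noteq> c u2" using st u by (auto simp: almost_colouring_def proper_on_def)
    have cross: "c b \<noteq> i \<and> c b \<noteq> m"
      if "a \<in> S" "b \<notin> S" "b \<in> W - {v}" "adj a b" for a b
      using kempe_chain_closed[of a v c i m b] that by (auto simp: S_def)
    show ?thesis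
      using ne cross[of u1 u2] cross[of u2 u1] u adj_sym kempe_chain_colours[of u1 v c i m]
        kempe_chain_colours[of u2 v c i m]
      unfolding c'_def S_def by (cases "u1 \<in> kempe_chain v c i m"; cases "u2 \<in> kempe_chain v c i m") auto
  qed
  hence "almost_colouring v c'"
    using st im by (auto simp: almost_colouring_def proper_on_def c'_def)
  thus thesis using that by (simp add: c'_def S_def)
qed

text \<open>The \<open>(i,k)\<close>-chain of \<open>v\<close> is 2-regular, so after deleting the neighbour \<open>p\<close> of \<open>v\<close> the only
  vertices of odd degree are \<open>v\<close> and the other chain neighbour \<open>w\<close> of \<open>p\<close>; by the handshake
  lemma they lie in the same component.\<close>
lemma kempe_linked_avoiding:
  assumes st: "almost_colouring v c" and ik: "i \<noteq> k" "i < r" "k < r"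
    and p: "p \<in> kempe_set v c i k" "adj v p"
    and w: "{u \<in> kempe_set v c i k. adj p u} = {v, w}"
  shows "linked (kempe_set v c i k - {p}) v w"
proof -
  define K where "K = kempe_set v c i k"
  define D where "D = K - {p}"
  have vW: "v \<in> W" using st by (simp add: almost_colouring_def)
  have vD: "v \<in> D" using p adj_irrefl centre_in_kempe_set by (auto simp: D_def K_def)
  have finD: "finite D" using finite_subset[OF kempe_set_subset[OF vW] finite_W] by (simp add: D_def K_def)
  have "card {u \<in> K. adj v u} = 2"
    using kempe_degree[OF st ik linked_refl] by (simp add: K_def)
  moreover have "{u \<in> D. adj v u} = {u \<in> K. adj v u} - {p}" by (auto simp: D_def)
  moreover have "p \<in> {u \<in> K. adj v u}" using p by (simp add: K_def)
  ultimately have "card {u \<in> D. adj v u} = 1" by (simp add: card_Diff_singleton)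
  then obtain z where z: "z \<noteq> v" "linked D v z" "odd (card {u \<in> D. adj z u})"
    using linked_odd_degree[OF finD vD] by auto
  have "z = w"
  proof (rule ccontr)
    assume "z \<noteq> w"
    hence "\<not> adj z p" using z(1) linked_closed[OF z(2) vD] w adj_sym by (auto simp: D_def K_def)
    hence "{u \<in> D. adj z u} = {u \<in> K. adj z u}" by (auto simp: D_def)
    moreover have "linked K v z" using linked_mono[OF _ z(2)] by (auto simp: D_def)
    ultimately have "card {u \<in> D. adj z u} = 2" using kempe_degree[OF st ik] by (simp add: K_def)
    thus False using z(3) by simp
  qed
  thus ?thesis using z(2) by (simp add: D_def K_def)
qed

lemma kempe_second_nbr:
  assumes st: "almost_colouring v c" and ik: "i \<noteq> k" "i < r" "k < r"
    and p: "p \<in> nbrs v" "c p = i"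
  obtains w where "{u \<in> kempe_set v c i k. adj p u} = {v, w}" "w \<in> W - {v}" "adj p w" "c w = k"
proof -
  define K where "K = kempe_set v c i k"
  have pW: "p \<in> W - {v}" using p nbrs_subset by auto
  have pK: "p \<in> K" "adj v p" using pW p by (auto simp: K_def kempe_set_def nbrs_def)
  have card2: "card {u \<in> K. adj p u} = 2"
    using kempe_degree[OF st ik linked_step[OF linked_refl centre_in_kempe_set]] pK by (simp add: K_def)
  then obtain a b where "{u \<in> K. adj p u} = {a, b}" by (meson card_2_iff)
  moreover have "v \<in> {u \<in> K. adj p u}" using pK adj_sym by (simp add: K_def centre_in_kempe_set)
  ultimately obtain w where w: "{u \<in> K. adj p u} = {v, w}" by (metis insertE insert_commute singletonD)
  have wv: "w \<noteq> v"
  proof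
    assume "w = v"
    hence "card {u \<in> K. adj p u} = 1" using w by simp
    thus False using card2 by simp
  qed
  have "w \<in> {u \<in> K. adj p u}" using w by simp
  hence wK: "w \<in> W - {v}" "adj p w" "c w = i \<or> c w = k" using wv by (auto simp: K_def kempe_set_def)
  have "c p \<noteq> c w" using proper_onD[of "W - {v}" c p w] st pW wK(1,2) by (simp add: almost_colouring_def)
  hence "c w = k" using wK(3) p(2) by auto
  thus thesis using that w wK by (simp add: K_def)
qed

text \<open>Vertices of the \<open>(i,k)\<close>-chain of \<open>v\<close> avoiding \<open>p\<close> keep their colour under the \<open>(i,m)\<close>-swap:
  a swapped one would lie on both the \<open>(i,k)\<close>- and the \<open>(i,m)\<close>-chain of \<open>v\<close>.\<close>
lemma kempe_swap_fixes_chain: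
  assumes st: "almost_colouring v c" and ik: "i \<noteq> k" "i < r" "k < r" and m: "m < r" "m \<noteq> i" "m \<noteq> k"
    and p: "p \<in> nbrs v" "c p = i"
    and off: "\<And>u. u \<notin> kempe_chain v c i m \<Longrightarrow> c' u = c u"
    and z: "linked (kempe_set v c i k - {p}) v z"
  shows "z \<in> kempe_set v c' k i"
proof (cases "z = v")
  case False
  have zK: "z \<in> W - {v}" "c z = i \<or> c z = k" "z \<noteq> p"
    using linked_closed[OF z] False p centre_in_kempe_set[of v c i k] adj_irrefl
    by (auto simp: kempe_set_def nbrs_def)
  have "z \<notin> kempe_chain v c i m"
  proof
    assume zc: "z \<in> kempe_chain v c i m"
    hence "c z = i" using kempe_chain_colours[OF zc] zK(2) m by auto
    hence "\<not> adj z v"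
      using almost_colouring_nbr_eq[OF st _ p(1), of z] zK p(2) adj_sym by (auto simp: nbrs_def)
    moreover have "linked (kempe_set v c i k) v z" using linked_mono[OF _ z] by blast
    ultimately show False
      using no_common_kempe_vertex[OF st _ _ _ ik(2) m(1) ik(3)] zc ik m False
      by (auto simp: kempe_chain_def)
  qed
  thus ?thesis using off zK by (auto simp: kempe_set_def)
qed (simp add: centre_in_kempe_set)

text \<open>For \<open>r \<ge> 3\<close>: if two neighbours \<open>p, q\<close> of \<open>v\<close> were non-adjacent, swapping \<open>i = c p\<close> with a
  third colour \<open>m\<close> on the \<open>(i,m)\<close>-chain of \<open>v\<close> puts the second \<open>(i,k)\<close>-chain neighbour \<open>w \<noteq> q\<close>
  of \<open>p\<close> on two Kempe chains of \<open>v\<close>: through \<open>p\<close>, now coloured \<open>m\<close>, and along the old chain.\<close>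
lemma nbrs_clique:
  assumes st: "almost_colouring v c" and r3: "3 \<le> r"
    and p: "p \<in> nbrs v" and q: "q \<in> nbrs v" and pq: "p \<noteq> q"
  shows "adj p q"
proof (rule ccontr)
  assume npq: "\<not> adj p q"
  define i k where "i = c p" and "k = c q"
  have pW: "p \<in> W - {v}" and qW: "q \<in> W - {v}" using p q nbrs_subset by auto
  have ik: "i \<noteq> k" "i < r" "k < r"
    using almost_colouring_nbr_eq[OF st p q] pq st pW qW by (auto simp: i_def k_def almost_colouring_def)
  obtain m where m: "m < r" "m \<noteq> i" "m \<noteq> k"
  proof -
    have "\<exists>m\<in>{0, 1, 2}. m \<noteq> i \<and> m \<noteq> k" using ik by auto
    then obtain m where "m \<in> {0, 1, 2::nat}" "m \<noteq> i" "m \<noteq> k" by blast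
    thus thesis using that[of m] r3 by auto
  qed
  have cp: "c p = i" by (simp add: i_def)
  obtain w where w: "{u \<in> kempe_set v c i k. adj p u} = {v, w}" "w \<in> W - {v}" "adj p w" "c w = k"
    using kempe_second_nbr[OF st ik p cp] by blast
  have w_not_nbr: "\<not> adj w v"
  proof
    assume "adj w v"
    hence "w \<in> nbrs v" using w(2) adj_sym by (simp add: nbrs_def)
    hence "w = q" using almost_colouring_nbr_eq[OF st _ q] w(4) by (simp add: k_def)
    thus False using w(3) npq by simp
  qed
  obtain c' where st': "almost_colouring v c'"
    and off: "\<And>u. u \<notin> kempe_chain v c i m \<Longrightarrow> c' u = c u"
    and on: "\<And>u. u \<in> kempe_chain v c i m \<Longrightarrow> c u = i \<Longrightarrow> c' u = m"
    using almost_colouring_kempe_swap[OF st ik(2) m(1)] by blast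
  have "p \<in> kempe_chain v c i m"
    using linked_step[OF linked_refl centre_in_kempe_set] pW p by (auto simp: kempe_chain_def kempe_set_def i_def nbrs_def)
  hence "c' p = m" using on by (simp add: i_def)
  moreover have "c' w = k" using off kempe_chain_colours[of w] w(4) ik m by fastforce
  ultimately have "p \<in> kempe_set v c' k m" "w \<in> kempe_set v c' k m" using pW w(2) by (auto simp: kempe_set_def)
  moreover have "adj v p" using p by (simp add: nbrs_def)
  ultimately have chain_km: "linked (kempe_set v c' k m) v w"
    using linked_step[OF linked_step[OF linked_refl centre_in_kempe_set]] w(3) by blast
  have "linked (kempe_set v c i k - {p}) v w"
    using kempe_linked_avoiding[OF st ik] pW p w(1) cp by (simp add: kempe_set_def nbrs_def)
  moreover have "{z. linked (kempe_set v c i k - {p}) v z} \<subseteq> kempe_set v c' k i"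
    using kempe_swap_fixes_chain[OF st ik m p cp off] by blast
  ultimately have chain_ki: "linked (kempe_set v c' k i) v w" using linked_mono linked_component by blast
  show False
    using no_common_kempe_vertex[OF st' _ _ _ ik(3) ik(2) m(1) chain_ki chain_km] w(2) w_not_nbr ik m
    by auto
qed

lemma component_in_closed_nbhd:
  assumes st: "almost_colouring x c" and r3: "3 \<le> r" and z: "linked W x z"
  shows "z = x \<or> z \<in> nbrs x"
  using z unfolding linked_def
proof (induction rule: rtranclp_induct)
  case (step z' z)
  have xW: "x \<in> W" using st by (simp add: almost_colouring_def)
  show ?case
  proof (cases "z' = x")
    case True thus ?thesis using step by (auto simp: nbrs_def)
  next
    case False
    hence u: "z' \<in> nbrs x" using step by simp
    have "insert x (nbrs x - {z'}) \<subseteq> nbrs z'"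
      using nbrs_clique[OF st r3 u] u adj_sym xW by (auto simp: nbrs_def)
    moreover have "card (insert x (nbrs x - {z'})) = r"
    proof -
      have "x \<notin> nbrs x - {z'}" using nbrs_subset by blast
      moreover have "card (nbrs x - {z'}) = r - 1"
        using almost_colouring_card_nbrs[OF st] u by (simp add: card_Diff_singleton)
      moreover have "0 < r" using almost_colouring_card_nbrs[OF st] u finite_nbrs card_gt_0_iff by force
      ultimately show ?thesis using finite_nbrs by simp
    qed
    moreover have "card (nbrs z') = r"
      using almost_colouring_card_nbrs[OF almost_colouring_move[OF st u]] .
    ultimately have "nbrs z' = insert x (nbrs x - {z'})"
      using card_subset_eq[OF finite_nbrs] by metis
    moreover have "z \<in> nbrs z'" using step by (simp add: nbrs_def)
    ultimately show ?thesis by auto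
  qed
qed simp

lemma component_complete:
  assumes st: "almost_colouring x c" and r3: "3 \<le> r"
    and u: "linked W x u" and v: "linked W x v" and uv: "u \<noteq> v"
  shows "adj u v"
proof -
  have u': "u = x \<or> u \<in> nbrs x" and v': "v = x \<or> v \<in> nbrs x"
    using component_in_closed_nbhd[OF st r3] u v by blast+
  show ?thesis
  proof (cases "u = x \<or> v = x")
    case True
    thus ?thesis using u' v' uv adj_sym by (auto simp: nbrs_def)
  next
    case False
    thus ?thesis using u' v' uv nbrs_clique[OF st r3] by blast
  qed
qed

lemma component_odd_cycle:
  assumes st: "almost_colouring x c" and r2: "r = 2"
  obtains vs where "cycle vs" "set vs = {z. linked W x z}" "odd (length vs)"
proof -
  have xW: "x \<in> W" using st by (simp add: almost_colouring_def)
  have cW: "\<forall>u\<in>W - {x}. c u < r" using st by (simp add: almost_colouring_def)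
  hence "\<forall>u\<in>W - {x}. c u = 0 \<or> c u = 1" using r2 by (auto simp: less_2_cases_iff)
  hence "kempe_set x c 0 1 = W" using xW by (auto simp: kempe_set_def)
  hence "card (nbrs z) = 2" if "linked W x z" for z using card_nbrs_linked[OF st] that r2 by metis
  then obtain vs where vs: "cycle vs" "set vs = {z. linked W x z}"
    using two_regular_component_cycle[OF xW] by blast
  have "odd (length vs)"
  proof
    assume "even (length vs)"
    then obtain g :: "'a \<Rightarrow> nat" where g: "\<And>u. g u < 2"
      "\<And>u v. u \<in> set vs \<Longrightarrow> v \<in> set vs \<Longrightarrow> adj u v \<Longrightarrow> g u \<noteq> g v"
      using even_cycle_colouring[OF vs(1)] by blast
    define h where "h u = (if u \<in> set vs then g u else c u)" for u
    have closed: "u \<in> set vs \<longleftrightarrow> v \<in> set vs" if "u \<in> W" "v \<in> W" "adj u v" for u v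
      using that vs(2) linked_step[of W x u v] linked_step[of W x v u] adj_sym by auto
    have x_in: "x \<in> set vs" using vs(2) linked_refl by simp
    have "proper_on W h"
      unfolding proper_on_def
    proof (intro ballI impI)
      fix u v assume "u \<in> W" "v \<in> W" "adj u v"
      thus "h u \<noteq> h v"
        using closed[of u v] g(2)[of u v] x_in proper_onD[of "W - {x}" c u v] st
        by (auto simp: h_def almost_colouring_def)
    qed
    moreover have "\<forall>u\<in>W. h u < r" using g(1) cW x_in r2 by (auto simp: h_def)
    ultimately show False using not_colourable by blast
  qed
  thus thesis using that vs by blast
qed

end

lemma simple_graph_edge:
  "simple_graph V E \<Longrightarrow> e \<in> E \<Longrightarrow> \<exists>u v. e = {u, v} \<and> u \<noteq> v \<and> u \<in> V \<and> v \<in> V"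
  unfolding simple_graph_def by blast

lemma simple_graph_no_loop: "simple_graph V E \<Longrightarrow> {u, u} \<notin> E"
  using simple_graph_edge[of V E "{u, u}"] by (auto simp: doubleton_eq_iff)

lemma sym_graph_simple_graph:
  assumes "simple_graph V E" "W \<subseteq> V"
  shows "sym_graph W (\<lambda>u v. {u, v} \<in> E)"
proof
  show "finite W" using assms finite_subset by (auto simp: simple_graph_def)
qed (use simple_graph_no_loop[OF assms(1)] in \<open>auto simp: insert_commute\<close>)

lemma chi_le: "colorable V E k \<Longrightarrow> chi V E \<le> k"
  unfolding chi_def by (rule Least_le)

lemma num_induced_edges_remove:
  assumes G: "simple_graph V E" and S: "finite S" and v: "v \<in> S"
  shows "num_induced_edges E S = num_induced_edges E (S - {v}) + card {u \<in> S. {v, u} \<in> E}"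
proof -
  define Ev where "Ev = {e \<in> E. e \<subseteq> S \<and> v \<in> e}"
  have split: "induced_edges E S = induced_edges E (S - {v}) \<union> Ev"
    and disj: "induced_edges E (S - {v}) \<inter> Ev = {}"
    by (auto simp: induced_edges_def Ev_def)
  have fin: "finite (induced_edges E (S - {v}))" "finite Ev"
    by (auto intro: finite_subset[of _ "Pow S"] simp: induced_edges_def Ev_def S)
  have "Ev = (\<lambda>u. {v, u}) ` {u \<in> S. {v, u} \<in> E}"
  proof
    show "Ev \<subseteq> (\<lambda>u. {v, u}) ` {u \<in> S. {v, u} \<in> E}"
    proof
      fix e assume e: "e \<in> Ev"
      hence "e \<in> E" by (simp add: Ev_def)
      then obtain a b where "e = {a, b}" using simple_graph_edge[OF G] by blast
      hence "e = {v, if a = v then b else a}" using e by (auto simp: Ev_def)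
      thus "e \<in> (\<lambda>u. {v, u}) ` {u \<in> S. {v, u} \<in> E}" using e by (auto simp: Ev_def)
    qed
  qed (use v in \<open>auto simp: Ev_def\<close>)
  moreover have "inj_on (\<lambda>u. {v, u}) {u \<in> S. {v, u} \<in> E}"
    by (auto simp: inj_on_def doubleton_eq_iff)
  ultimately have "card Ev = card {u \<in> S. {v, u} \<in> E}" by (simp add: card_image)
  thus ?thesis
    unfolding num_induced_edges_def split using card_Un_disjoint[OF fin disj] by simp
qed

lemma partitioned_coloringD:
  assumes "partitioned_coloring V E a r x L"
  shows "x \<in> V"
    and "\<And>k j. k \<in> {1..a} \<Longrightarrow> j \<in> {1..r k} \<Longrightarrow>
      L k j \<subseteq> V \<and> L k j \<noteq> {} \<and> x \<notin> L k j \<and> (\<forall>u\<in>L k j. \<forall>v\<in>L k j. {u, v} \<notin> E)"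
    and "\<And>k j k' j'. k \<in> {1..a} \<Longrightarrow> j \<in> {1..r k} \<Longrightarrow> k' \<in> {1..a} \<Longrightarrow> j' \<in> {1..r k'} \<Longrightarrow>
      (k, j) \<noteq> (k', j') \<Longrightarrow> L k j \<inter> L k' j' = {}"
    and "V = {x} \<union> (\<Union>k\<in>{1..a}. \<Union>j\<in>{1..r k}. L k j)"
  using assms unfolding partitioned_coloring_def by blast+

lemma x_notin_U_part:
  "partitioned_coloring V E a r x L \<Longrightarrow> i \<in> {1..a} \<Longrightarrow> x \<notin> U_part r L i"
  using partitioned_coloringD(2) by (fastforce simp: U_part_def)

lemma U_part_subset:
  "partitioned_coloring V E a r x L \<Longrightarrow> i \<in> {1..a} \<Longrightarrow> U_part r L i \<subseteq> V"
  using partitioned_coloringD(2) by (fastforce simp: U_part_def)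

lemma colorable_U_part:
  assumes pi: "partitioned_coloring V E a r x L" and i: "i \<in> {1..a}"
  shows "colorable (U_part r L i) E (r i)"
proof -
  define cls where "cls u = (SOME j. j \<in> {1..r i} \<and> u \<in> L i j)" for u
  have cls: "cls u \<in> {1..r i} \<and> u \<in> L i (cls u)" if "u \<in> U_part r L i" for u
  proof -
    have "\<exists>j. j \<in> {1..r i} \<and> u \<in> L i j" using that by (auto simp: U_part_def)
    thus ?thesis unfolding cls_def by (rule someI_ex)
  qed
  show ?thesis unfolding colorable_def
  proof (intro exI[of _ "\<lambda>u. cls u - 1"] conjI ballI impI)
    fix u assume "u \<in> U_part r L i" thus "cls u - 1 < r i" using cls by fastforce
  next
    fix u v assume u: "u \<in> U_part r L i" and v: "v \<in> U_part r L i" and e: "{u, v} \<in> E"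
    have "cls u \<noteq> cls v" using partitioned_coloringD(2)[OF pi i] cls[OF u] cls[OF v] e by metis
    thus "cls u - 1 \<noteq> cls v - 1" using cls[OF u] cls[OF v] by auto
  qed
qed

lemma colorable_extend:
  assumes col: "colorable S E m" and P: "finite P"
    and cover: "V - S \<subseteq> (\<Union>p\<in>P. C p)"
    and indep: "\<And>p u v. p \<in> P \<Longrightarrow> u \<in> C p \<Longrightarrow> v \<in> C p \<Longrightarrow> {u, v} \<notin> E"
  shows "colorable V E (m + card P)"
proof -
  obtain f where f: "\<forall>v\<in>S. f v < m" "\<forall>u\<in>S. \<forall>v\<in>S. {u, v} \<in> E \<longrightarrow> f u \<noteq> f v"
    using col by (auto simp: colorable_def)
  obtain h where h: "bij_betw h P {0..<card P}" using ex_bij_betw_finite_nat[OF P] by blast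
  define pick where "pick u = (SOME p. p \<in> P \<and> u \<in> C p)" for u
  have pick: "pick u \<in> P \<and> u \<in> C (pick u)" if "u \<in> V - S" for u
    using someI_ex[of "\<lambda>p. p \<in> P \<and> u \<in> C p"] cover that by (auto simp: pick_def)
  define g where "g u = (if u \<in> S then f u else m + h (pick u))" for u
  show ?thesis unfolding colorable_def
  proof (intro exI[of _ g] conjI ballI impI)
    fix u assume "u \<in> V"
    thus "g u < m + card P" using f(1) pick[of u] h by (auto simp: g_def bij_betw_def)
  next
    fix u v assume uv: "u \<in> V" "v \<in> V" "{u, v} \<in> E"
    show "g u \<noteq> g v"
    proof (cases "u \<in> S \<or> v \<in> S")
      case True
      thus ?thesis using f uv by (auto simp: g_def)
    next
      case False
      have pu: "pick u \<in> P" "u \<in> C (pick u)" and pv: "v \<in> C (pick v)"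
        using pick[of u] pick[of v] uv False by auto
      have "pick u \<noteq> pick v" using indep[OF pu] pv uv(3) by metis
      hence "h (pick u) \<noteq> h (pick v)"
        using h pick[of u] pick[of v] uv False by (auto simp: bij_betw_def inj_on_def)
      thus ?thesis using False by (simp add: g_def)
    qed
  qed
qed

text \<open>Otherwise \<open>{x} \<union> U\<^sub>i\<close> gets \<open>r\<^sub>i\<close> colours and the other classes keep theirs: \<open>\<chi>(G) - 1\<close> colours.\<close>
lemma not_colorable_part:
  assumes rsum: "1 + (\<Sum>k=1..a. r k) = chi V E"
    and pi: "partitioned_coloring V E a r x L" and i: "i \<in> {1..a}"
  shows "\<not> colorable ({x} \<union> U_part r L i) E (r i)"
proof
  assume col: "colorable ({x} \<union> U_part r L i) E (r i)"
  define P where "P = Sigma ({1..a} - {i}) (\<lambda>k. {1..r k})"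
  have "V - ({x} \<union> U_part r L i) \<subseteq> (\<Union>p\<in>P. case p of (k, j) \<Rightarrow> L k j)"
    using partitioned_coloringD(4)[OF pi] by (auto simp: P_def U_part_def)
  moreover have "\<And>p u v. p \<in> P \<Longrightarrow> u \<in> (case p of (k, j) \<Rightarrow> L k j) \<Longrightarrow>
      v \<in> (case p of (k, j) \<Rightarrow> L k j) \<Longrightarrow> {u, v} \<notin> E"
    using partitioned_coloringD(2)[OF pi] by (auto simp: P_def)
  ultimately have "chi V E \<le> r i + card P"
    using chi_le colorable_extend[OF col] by (metis P_def finite_SigmaI finite_Diff finite_atLeastAtMost)
  moreover have "card P = (\<Sum>k\<in>{1..a} - {i}. r k)" by (simp add: P_def)
  moreover have "(\<Sum>k=1..a. r k) = r i + (\<Sum>k\<in>{1..a} - {i}. r k)"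
    using sum.remove[of "{1..a}" i r] i by simp
  ultimately show False using rsum by simp
qed

lemma L_disjoint_part:
  assumes pi: "partitioned_coloring V E a r x L" and i: "i \<in> {1..a}"
    and kj: "k \<in> {1..a}" "j \<in> {1..r k}" "k \<noteq> i"
  shows "L k j \<inter> ({x} \<union> U_part r L i) = {}"
  using partitioned_coloringD(2)[OF pi kj(1,2)] partitioned_coloringD(3)[OF pi kj(1,2) i] kj(3)
  by (fastforce simp: U_part_def)

lemma move_singleton_covers:
  fixes x y :: 'a and r :: "nat \<Rightarrow> nat" and L :: "nat \<Rightarrow> nat \<Rightarrow> 'a set"
    and i :: nat and f :: "'a \<Rightarrow> nat"
  defines "W \<equiv> {x} \<union> U_part r L i"
  defines "L' \<equiv> \<lambda>k j. if k = i then {u \<in> W - {y}. f u = j - 1} else L k j"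
  assumes pi: "partitioned_coloring V E a r x L" and i: "i \<in> {1..a}"
    and f: "\<forall>u\<in>W - {y}. f u < r i"
  shows "V - {y} \<subseteq> (\<Union>k\<in>{1..a}. \<Union>j\<in>{1..r k}. L' k j)"
proof
  fix u assume u: "u \<in> V - {y}"
  show "u \<in> (\<Union>k\<in>{1..a}. \<Union>j\<in>{1..r k}. L' k j)"
  proof (cases "u \<in> W")
    case True
    hence "f u < r i" using f u by blast
    hence "f u + 1 \<in> {1..r i}" "u \<in> L' i (f u + 1)" using True u by (auto simp: L'_def)
    thus ?thesis using i by blast
  next
    case False
    then obtain k j where kj: "k \<in> {1..a}" "j \<in> {1..r k}" "u \<in> L k j"
      using u partitioned_coloringD(4)[OF pi] by (auto simp: W_def)
    hence "k \<noteq> i" using False by (auto simp: W_def U_part_def)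
    hence "u \<in> L' k j" using kj by (simp add: L'_def)
    thus ?thesis using kj by blast
  qed
qed

lemma partitioned_coloring_move_singleton:
  fixes x y :: 'a and r :: "nat \<Rightarrow> nat" and L :: "nat \<Rightarrow> nat \<Rightarrow> 'a set"
    and i :: nat and f :: "'a \<Rightarrow> nat"
  defines "W \<equiv> {x} \<union> U_part r L i"
  defines "L' \<equiv> \<lambda>k j. if k = i then {u \<in> W - {y}. f u = j - 1} else L k j"
  assumes pi: "partitioned_coloring V E a r x L" and i: "i \<in> {1..a}" and y: "y \<in> W"
    and f: "\<forall>u\<in>W - {y}. f u < r i" "\<forall>u\<in>W - {y}. \<forall>v\<in>W - {y}. {u, v} \<in> E \<longrightarrow> f u \<noteq> f v"
    and onto: "\<forall>c<r i. \<exists>u\<in>W - {y}. f u = c"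
  shows "partitioned_coloring V E a r y L'"
proof -
  note p = partitioned_coloringD[OF pi]
  have WV: "W \<subseteq> V" using p(1) U_part_subset[OF pi i] by (simp add: W_def)
  have disj: "L k j \<inter> W = {}" if "k \<in> {1..a}" "j \<in> {1..r k}" "k \<noteq> i" for k j
    using L_disjoint_part[OF pi i that] by (simp add: W_def)
  show ?thesis unfolding partitioned_coloring_def
  proof (intro conjI ballI impI)
    show "y \<in> V" using y WV by blast
  next
    fix k j assume k: "k \<in> {1..a}" and j: "j \<in> {1..r k}"
    show "L' k j \<subseteq> V" using p(2)[OF k j] WV by (auto simp: L'_def)
    show "L' k j \<noteq> {}"
    proof (cases "k = i")
      case True
      hence "j - 1 < r i" using j by auto
      then obtain u where "u \<in> W - {y}" "f u = j - 1" using onto by blast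
      thus ?thesis using True by (auto simp: L'_def)
    qed (use p(2)[OF k j] in \<open>simp add: L'_def\<close>)
    show "y \<notin> L' k j" using disj[OF k j] y by (auto simp: L'_def)
    show "{u, v} \<notin> E" if "u \<in> L' k j" "v \<in> L' k j" for u v
    proof (cases "k = i")
      case True
      hence "u \<in> W - {y}" "v \<in> W - {y}" "f u = f v" using that by (auto simp: L'_def)
      thus ?thesis using f(2) by blast
    next
      case False thus ?thesis using that p(2)[OF k j] by (simp add: L'_def)
    qed
  next
    fix k j k' j' assume k: "k \<in> {1..a}" "j \<in> {1..r k}" and k': "k' \<in> {1..a}" "j' \<in> {1..r k'}"
      and ne: "(k, j) \<noteq> (k', j')"
    show "L' k j \<inter> L' k' j' = {}"
    proof (cases "k = i \<or> k' = i")
      case True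
      thus ?thesis using ne k k' disj[OF k] disj[OF k'] by (auto simp: L'_def)
    next
      case False
      thus ?thesis using p(3)[OF k k' ne] by (simp add: L'_def)
    qed
  next
    have "L' k j \<subseteq> V" if "k \<in> {1..a}" "j \<in> {1..r k}" for k j
      using p(2)[OF that] WV by (auto simp: L'_def)
    thus "V = {y} \<union> (\<Union>k\<in>{1..a}. \<Union>j\<in>{1..r k}. L' k j)"
      using move_singleton_covers[OF pi i f(1)[unfolded W_def]] y WV unfolding L'_def W_def by blast
  qed
qed

lemma U_part_move_singleton:
  fixes x y :: 'a and r :: "nat \<Rightarrow> nat" and L :: "nat \<Rightarrow> nat \<Rightarrow> 'a set"
    and i :: nat and f :: "'a \<Rightarrow> nat"
  defines "W \<equiv> {x} \<union> U_part r L i"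
  defines "L' \<equiv> \<lambda>k j. if k = i then {u \<in> W - {y}. f u = j - 1} else L k j"
  assumes f: "\<forall>u\<in>W - {y}. f u < r i"
  shows "U_part r L' i = W - {y}" and "k \<noteq> i \<Longrightarrow> U_part r L' k = U_part r L k"
proof -
  show "U_part r L' i = W - {y}"
  proof
    show "U_part r L' i \<subseteq> W - {y}" by (auto simp: U_part_def L'_def)
    show "W - {y} \<subseteq> U_part r L' i"
    proof
      fix u assume u: "u \<in> W - {y}"
      hence "f u < r i" using f by blast
      hence "f u + 1 \<in> {1..r i}" by simp
      thus "u \<in> U_part r L' i" using u unfolding U_part_def L'_def by force
    qed
  qed
qed (simp add: U_part_def L'_def)

lemma pc_cost_update:
  assumes i: "i \<in> {1..a}" and same: "\<And>k. k \<noteq> i \<Longrightarrow> U_part r L' k = U_part r L k"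
  shows "pc_cost E a r L' + num_induced_edges E (U_part r L i)
       = pc_cost E a r L + num_induced_edges E (U_part r L' i)"
proof -
  let ?n = "\<lambda>L k. num_induced_edges E (U_part r L k)"
  have "pc_cost E a r L' = ?n L' i + (\<Sum>k\<in>{1..a} - {i}. ?n L' k)"
    "pc_cost E a r L = ?n L i + (\<Sum>k\<in>{1..a} - {i}. ?n L k)"
    unfolding pc_cost_def using sum.remove[OF finite_atLeastAtMost i] by blast+
  moreover have "(\<Sum>k\<in>{1..a} - {i}. ?n L' k) = (\<Sum>k\<in>{1..a} - {i}. ?n L k)"
    using same by simp
  ultimately show ?thesis by simp
qed

lemma uncolourable_graph_part:
  assumes G: "simple_graph V E" and rsum: "1 + (\<Sum>k=1..a. r k) = chi V E"
    and pi: "partitioned_coloring V E a r x L" and i: "i \<in> {1..a}"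
  shows "uncolourable_graph ({x} \<union> U_part r L i) (\<lambda>u v. {u, v} \<in> E) (r i)"
proof -
  have sg: "sym_graph ({x} \<union> U_part r L i) (\<lambda>u v. {u, v} \<in> E)"
    using sym_graph_simple_graph[OF G] partitioned_coloringD(1)[OF pi] U_part_subset[OF pi i] by simp
  show ?thesis
  proof (rule uncolourable_graph.intro[OF sg], unfold_locales)
    fix f show "\<not> ((\<forall>u\<in>{x} \<union> U_part r L i. f u < r i) \<and>
        sym_graph.proper_on (\<lambda>u v. {u, v} \<in> E) ({x} \<union> U_part r L i) f)"
      using not_colorable_part[OF rsum pi i] by (auto simp: colorable_def sym_graph.proper_on_def[OF sg])
  qed
qed

text \<open>Moving the singleton to \<open>y\<close> changes the cost by \<open>\<parallel>G[W - y]\<parallel> - \<parallel>G[W - x]\<parallel>\<close>, which by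
  minimality is non-negative, i.e. \<open>d(y) \<le> d(x) = r\<^sub>i\<close>.\<close>
lemma tight_uncolourable_graph_part:
  assumes G: "simple_graph V E" and rsum: "1 + (\<Sum>k=1..a. r k) = chi V E"
    and pi: "partitioned_coloring V E a r x L"
    and minimal: "\<forall>y L'. partitioned_coloring V E a r y L' \<longrightarrow> pc_cost E a r L \<le> pc_cost E a r L'"
    and i: "i \<in> {1..a}" and deg: "card {u \<in> {x} \<union> U_part r L i. {x, u} \<in> E} = r i"
  shows "tight_uncolourable_graph ({x} \<union> U_part r L i) (\<lambda>u v. {u, v} \<in> E) (r i)"
proof -
  define W where "W = {x} \<union> U_part r L i"
  have U: "uncolourable_graph W (\<lambda>u v. {u, v} \<in> E) (r i)"
    using uncolourable_graph_part[OF G rsum pi i] by (simp add: W_def)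
  interpret U: uncolourable_graph W "\<lambda>u v. {u, v} \<in> E" "r i" by (rule U)
  have finW: "finite W" by (rule U.finite_W)
  have "tight_uncolourable_graph W (\<lambda>u v. {u, v} \<in> E) (r i)"
  proof (rule tight_uncolourable_graph.intro[OF U], unfold_locales)
    fix y f assume st: "U.almost_colouring y f"
    have y: "y \<in> W" and f: "\<forall>u\<in>W - {y}. f u < r i"
      "\<forall>u\<in>W - {y}. \<forall>v\<in>W - {y}. {u, v} \<in> E \<longrightarrow> f u \<noteq> f v"
      using st by (auto simp: U.almost_colouring_def U.proper_on_def)
    have "\<forall>c<r i. \<exists>u\<in>W - {y}. f u = c"
      using U.almost_colouring_nbr_coloured[OF st] U.nbrs_subset by blast
    define L' where "L' k j = (if k = i then {u \<in> W - {y}. f u = j - 1} else L k j)" for k j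
    have "partitioned_coloring V E a r y L'"
      using partitioned_coloring_move_singleton[OF pi i, of y f] y f \<open>\<forall>c<r i. _\<close>
      unfolding L'_def W_def by blast
    hence "pc_cost E a r L \<le> pc_cost E a r L'" using minimal by blast
    moreover have "U_part r L' i = W - {y}" "\<And>k. k \<noteq> i \<Longrightarrow> U_part r L' k = U_part r L k"
      using U_part_move_singleton[of x r L i y f] f(1) unfolding L'_def W_def by blast+
    moreover have "U_part r L i = W - {x}" using x_notin_U_part[OF pi i] by (auto simp: W_def)
    ultimately have "num_induced_edges E (W - {x}) \<le> num_induced_edges E (W - {y})"
      using pc_cost_update[OF i, of r L' L E] by simp
    moreover have "num_induced_edges E W = num_induced_edges E (W - {x}) + r i"
      using num_induced_edges_remove[OF G finW, of x] deg by (simp add: W_def)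
    moreover have "num_induced_edges E W = num_induced_edges E (W - {y}) + card (U.nbrs y)"
      using num_induced_edges_remove[OF G finW y] by (simp add: U.nbrs_def)
    ultimately show "card (U.nbrs y) \<le> r i" by linarith
  qed
  thus ?thesis by (simp add: W_def)
qed

lemma almost_colouring_part:
  assumes G: "simple_graph V E" and rsum: "1 + (\<Sum>k=1..a. r k) = chi V E"
    and pi: "partitioned_coloring V E a r x L" and i: "i \<in> {1..a}"
  shows "\<exists>c. uncolourable_graph.almost_colouring ({x} \<union> U_part r L i) (\<lambda>u v. {u, v} \<in> E) (r i) x c"
proof -
  define W where "W = {x} \<union> U_part r L i"
  interpret U: uncolourable_graph W "\<lambda>u v. {u, v} \<in> E" "r i"
    using uncolourable_graph_part[OF G rsum pi i] by (simp add: W_def)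
  obtain c where "\<forall>v\<in>U_part r L i. c v < r i"
    "\<forall>u\<in>U_part r L i. \<forall>v\<in>U_part r L i. {u, v} \<in> E \<longrightarrow> c u \<noteq> c v"
    using colorable_U_part[OF pi i] by (auto simp: colorable_def)
  moreover have "W - {x} = U_part r L i" "x \<in> W" using x_notin_U_part[OF pi i] by (auto simp: W_def)
  ultimately have "U.almost_colouring x c" by (simp add: U.almost_colouring_def U.proper_on_def)
  thus ?thesis by (auto simp: W_def)
qed

lemma component_eq_linked:
  assumes sg: "sym_graph S (\<lambda>u v. {u, v} \<in> E)" and x: "x \<in> S"
  shows "component E S x = {z. sym_graph.linked (\<lambda>u v. {u, v} \<in> E) S x z}"
proof -
  have "z \<in> S" if "sym_graph.linked (\<lambda>u v. {u, v} \<in> E) S x z" for z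
    using sym_graph.linked_closed[OF sg that x] .
  thus ?thesis unfolding component_def sym_graph.linked_def[OF sg] by blast
qed

lemma degree_component:
  assumes sg: "sym_graph S (\<lambda>u v. {u, v} \<in> E)" and x: "x \<in> S"
  shows "degree (induced_edges E (component E S x)) x = card {u \<in> S. {x, u} \<in> E}"
proof -
  have "{u. {x, u} \<in> induced_edges E (component E S x) \<and> u \<noteq> x} = {u \<in> S. {x, u} \<in> E}"
  proof
    have "component E S x \<subseteq> S" by (auto simp: component_def)
    thus "{u. {x, u} \<in> induced_edges E (component E S x) \<and> u \<noteq> x} \<subseteq> {u \<in> S. {x, u} \<in> E}"
      by (auto simp: induced_edges_def)
    show "{u \<in> S. {x, u} \<in> E} \<subseteq> {u. {x, u} \<in> induced_edges E (component E S x) \<and> u \<noteq> x}"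
    proof
      fix u assume u: "u \<in> {u \<in> S. {x, u} \<in> E}"
      hence "sym_graph.linked (\<lambda>u v. {u, v} \<in> E) S x u"
        using sym_graph.linked_step[OF sg sym_graph.linked_refl[OF sg] x] by simp
      hence "{x, u} \<subseteq> component E S x"
        using component_eq_linked[OF sg x] sym_graph.linked_refl[OF sg] by auto
      moreover have "u \<noteq> x" using u sym_graph.adj_irrefl[OF sg] by auto
      ultimately show "u \<in> {u. {x, u} \<in> induced_edges E (component E S x) \<and> u \<noteq> x}"
        using u by (simp add: induced_edges_def)
    qed
  qed
  thus ?thesis by (simp add: degree_def)
qed

lemma odd_cycle_induced:
  assumes G: "simple_graph V E"
    and vs: "distinct vs" "set vs = C" "3 \<le> length vs" "odd (length vs)"
    and edges: "\<And>a b. a \<in> C \<Longrightarrow> b \<in> C \<Longrightarrow>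
      {a, b} \<in> E \<longleftrightarrow> (\<exists>k<length vs. {a, b} = {vs!k, vs!((k + 1) mod length vs)})"
  shows "odd_cycle C (induced_edges E C)"
proof -
  have "induced_edges E C = {{vs!k, vs!((k + 1) mod length vs)} | k. k < length vs}"
  proof
    show "induced_edges E C \<subseteq> {{vs!k, vs!((k + 1) mod length vs)} | k. k < length vs}"
    proof
      fix e assume e: "e \<in> induced_edges E C"
      hence "e \<in> E" by (simp add: induced_edges_def)
      then obtain u v where uv: "e = {u, v}" using simple_graph_edge[OF G] by blast
      hence "u \<in> C" "v \<in> C" "{u, v} \<in> E" using e by (auto simp: induced_edges_def)
      then obtain k where "k < length vs" "{u, v} = {vs!k, vs!((k + 1) mod length vs)}"
        using edges by blast
      thus "e \<in> {{vs!k, vs!((k + 1) mod length vs)} | k. k < length vs}" using uv by blast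
    qed
    show "{{vs!k, vs!((k + 1) mod length vs)} | k. k < length vs} \<subseteq> induced_edges E C"
    proof
      fix e assume "e \<in> {{vs!k, vs!((k + 1) mod length vs)} | k. k < length vs}"
      then obtain k where k: "k < length vs" "e = {vs!k, vs!((k + 1) mod length vs)}" by blast
      moreover have "0 < length vs" using k(1) by linarith
      hence "(k + 1) mod length vs < length vs" by simp
      hence "vs!k \<in> C" "vs!((k + 1) mod length vs) \<in> C" using k(1) vs(2) nth_mem by blast+
      ultimately show "e \<in> induced_edges E C" using edges by (auto simp: induced_edges_def)
    qed
  qed
  thus ?thesis unfolding odd_cycle_def using vs by blast
qed

theorem lemma3p2:
  fixes V :: "'a set" and E :: "'a set set" and a :: nat and r :: "nat \<Rightarrow> nat"
    and x :: 'a and L :: "nat \<Rightarrow> nat \<Rightarrow> 'a set" and i :: nat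
  assumes G: "simple_graph V E"
    and crit: "\<exists>v. critical_vertex V E v"
    and a: "a \<ge> 1"
    and rpos: "\<forall>k\<in>{1..a}. r k > 0"
    and rsum: "1 + (\<Sum>k=1..a. r k) = chi V E"
    and pi: "partitioned_coloring V E a r x L"
    and minimal: "\<forall>y L'. partitioned_coloring V E a r y L' \<longrightarrow> pc_cost E a r L \<le> pc_cost E a r L'"
    and i: "1 \<le> i" "i \<le> a"
    and deg: "degree (induced_edges E (component E ({x} \<union> U_part r L i) x)) x = r i"
  shows "(r i \<ge> 3 \<longrightarrow> complete_graph (component E ({x} \<union> U_part r L i) x)
                        (induced_edges E (component E ({x} \<union> U_part r L i) x))) \<and>
         (r i = 2 \<longrightarrow> odd_cycle (component E ({x} \<union> U_part r L i) x)
                        (induced_edges E (component E ({x} \<union> U_part r L i) x)))"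
proof -
  define W where "W = {x} \<union> U_part r L i"
  have iA: "i \<in> {1..a}" and xW: "x \<in> W" using i by (auto simp: W_def)
  have sg: "sym_graph W (\<lambda>u v. {u, v} \<in> E)"
    using sym_graph_simple_graph[OF G] partitioned_coloringD(1)[OF pi] U_part_subset[OF pi iA]
    by (simp add: W_def)
  have "card {u \<in> W. {x, u} \<in> E} = r i" using deg degree_component[OF sg xW] by (simp add: W_def)
  then interpret T: tight_uncolourable_graph W "\<lambda>u v. {u, v} \<in> E" "r i"
    using tight_uncolourable_graph_part[OF G rsum pi minimal iA] by (simp add: W_def)
  have Z: "component E W x = {z. T.linked W x z}" by (rule component_eq_linked[OF sg xW])
  obtain c where c: "T.almost_colouring x c"
    using almost_colouring_part[OF G rsum pi iA] by (auto simp: W_def)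
  have "r i \<ge> 3 \<longrightarrow> complete_graph (component E W x) (induced_edges E (component E W x))"
    unfolding complete_graph_def induced_edges_def Z using T.component_complete[OF c] by blast
  moreover have "r i = 2 \<longrightarrow> odd_cycle (component E W x) (induced_edges E (component E W x))"
  proof
    assume "r i = 2"
    then obtain vs where vs: "T.cycle vs" "set vs = component E W x" "odd (length vs)"
      using T.component_odd_cycle[OF c] Z by metis
    have "distinct vs" "3 \<le> length vs" using vs(1) by (simp_all add: T.cycle_def)
    hence "odd_cycle (set vs) (induced_edges E (set vs))"
      using odd_cycle_induced[OF G _ refl _ vs(3)] T.cycle_adj_iff[OF vs(1)] by blast
    thus "odd_cycle (component E W x) (induced_edges E (component E W x))" using vs(2) by simp
  qed
  ultimately show ?thesis by (simp add: W_def)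
qed

end
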